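(* Under the strong-coordination polar coding scheme described in the context, $$\mathbb{D}\Big(\widetilde p_{X_{1:k}^{1:N}Y_{1:k}^{1:N}}\,\Big\|\,\prod_{i=1}^k\widetilde p_{X_i^{1:N}Y_i^{1:N}}\Big)\le(k-1)\,\delta_N^{(C)},$$ where $\delta_N^{(C)}=O(N^{9/4}\delta_N^{1/4})$ is a quantity (independent of $i,k$) bounding, for every $i\in\{2,\dots,k\}$, $\mathbb{D}(\widetilde p_{X_{i-1:i}^{1:N}Y_{i-1:i}^{1:N}\bar C_1}\|\widetilde p_{Y_{i-1}^{1:N}X_{i-1}^{1:N}}\widetilde p_{X_i^{1:N}Y_i^{1:N}\bar C_1})$.
   Context: All logarithms base 2, entropies in bits; $\mathbb{D}$ is Kullback–Leibler divergence. $\widetilde p_{X_{1:k}^{1:N}Y_{1:k}^{1:N}}$ is the joint law of $(X_i^{1:N},\widetilde Y_i^{1:N})_{i=1}^k$. For a vector $a^{1:N}$ and index set $\mathcal{A}$, $a^{1:N}[\mathcal{A}]$ is the subvector indexed by $\mathcal{A}$. Setting (strong coordination scheme): Let $q_{XYV}$ be a distribution on finite $\mathcal{X}\times\mathcal{Y}\times\mathcal{V}$ with $X\to V\to Y$ a Markov chain and $|\mathcal{Y}|,|\mathcal{V}|$ prime (identified with $\mathbb{F}_{|\mathcal{Y}|},\mathbb{F}_{|\mathcal{V}|}$). Let $N=2^n$, $G_n=\begin{bmatrix}1&0\\1&1\end{bmatrix}^{\otimes n}$, $(X^{1:N},Y^{1:N},V^{1:N})$ i.i.d. $q_{XYV}$,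 $U^{1:N}=V^{1:N}G_n$, $T^{1:N}=Y^{1:N}G_n$. Fix $\beta\in(0,1/2)$, $\delta_N=2^{-N^\beta}$, and $\mathcal{H}_V=\{j:H(U^j|U^{1:j-1})>\delta_N\}$, $\mathcal{V}_{V|X}=\{j:H(U^j|U^{1:j-1}X^{1:N})>\log|\mathcal{V}|-\delta_N\}$, $\mathcal{V}_{Y|V}=\{j:H(T^j|T^{1:j-1}V^{1:N})>\log|\mathcal{Y}|-\delta_N\}$, $\mathcal{V}_{V|XY}=\{j:H(U^j|U^{1:j-1}X^{1:N}Y^{1:N})>\log|\mathcal{V}|-\delta_N\}$; $\mathcal{F}_1=\mathcal{H}_V^c$, $\mathcal{F}_2=\mathcal{V}_{V|XY}$, $\mathcal{F}_3=\mathcal{V}_{V|X}\setminus\mathcal{V}_{V|XY}$, $\mathcal{F}_4=\mathcal{H}_V\setminus\mathcal{V}_{V|X}$. Over $k$ blocks, Node 1 observes $X_i^{1:N}$ i.i.d. $q_X$, independent across blocks. Common randomness: $\bar C_1$ uniform on $\mathcal{V}^{|\mathcal{F}_2|}$ and $C_1,\dots,C_k$ uniform on $\mathcal{V}^{|\mathcal{F}_3|}$, all independent. In block $i$, Node 1 sets $\widetilde U_i^{1:N}[\mathcal{F}_2]=\bar C_1$, $\widetilde U_i^{1:N}[\mathcal{F}_3]=C_i$, and for remaining $j$ in increasing order draws $\widetilde U_i^j$ from $q_{U^j|U^{1:j-1}}(\cdot|\widetilde U_i^{1:j-1})$ if $j\in\mathcal{F}_1$ and from $q_{U^j|U^{1:j-1}X^{1:N}}(\cdot|\widetilde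 U_i^{1:j-1},X_i^{1:N})$ if $j\in\mathcal{F}_4$. It sends $M_i=\widetilde U_i^{1:N}[\mathcal{F}_4]$ and the randomness $C_i'$ used for $\widetilde U_i^{1:N}[\mathcal{F}_1]$. Node 2 reconstructs $\widetilde U_i^{1:N}$, sets $\widetilde V_i^{1:N}=\widetilde U_i^{1:N}G_n$, then for $j=1,\dots,N$ draws $\widetilde T_i^j$ uniformly on $\mathcal{Y}$ if $j\in\mathcal{V}_{Y|V}$ and from $q_{T^j|T^{1:j-1}V^{1:N}}(\cdot|\widetilde T_i^{1:j-1},\widetilde V_i^{1:N})$ otherwise (fresh local randomness), and outputs $\widetilde Y_i^{1:N}=\widetilde T_i^{1:N}G_n$. $\widetilde p$ denotes distributions induced by the scheme. *)

theory Defs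
  imports "HOL-Probability.Probability"
begin

text \<open>Blocks of length N are lists indexed 0..N-1 (the paper's index j corresponds to j-1).
  Alphabets Y and V are identified with F_p, represented as nat in {..<p} with arithmetic mod p.\<close>

primrec iid :: "nat \<Rightarrow> 'a pmf \<Rightarrow> 'a list pmf" where
  "iid 0 p = return_pmf []"
| "iid (Suc m) p = bind_pmf p (\<lambda>a. map_pmf (\<lambda>as. a # as) (iid m p))"

primrec indep_list :: "'a pmf list \<Rightarrow> 'a list pmf" where
  "indep_list [] = return_pmf []"
| "indep_list (p # ps) = bind_pmf p (\<lambda>a. map_pmf (\<lambda>as. a # as) (indep_list ps))"

text \<open>Row vector times G_n = [[1,0],[1,1]]^{\<otimes>n} over F_p: G_n(i,j)=1 iff bits of j are bits of i.\<close>
definition polar :: "nat \<Rightarrow> nat \<Rightarrow> nat list \<Rightarrow> nat list" where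
  "polar p n a = map (\<lambda>j. (\<Sum>i<2^n. if (\<forall>b<n. bit j b \<longrightarrow> bit i b) then a ! i else 0) mod p) [0..<2^n]"

definition shannon_ent :: "'a pmf \<Rightarrow> real" where
  "shannon_ent p = - (\<Sum>a\<in>set_pmf p. pmf p a * log 2 (pmf p a))"

definition cond_ent :: "('a \<times> 'b) pmf \<Rightarrow> real" where
  "cond_ent J = shannon_ent J - shannon_ent (map_pmf snd J)"

text \<open>KL divergence in bits (used only where the support of p is contained in that of r).\<close>
definition KL :: "'a pmf \<Rightarrow> 'a pmf \<Rightarrow> real" where
  "KL p r = (\<Sum>a\<in>set_pmf p. pmf p a * log 2 (pmf p a / pmf r a))"

definition condk :: "('a \<times> 'b) pmf \<Rightarrow> 'b \<Rightarrow> 'a pmf" where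
  "condk J b = map_pmf fst (cond_pmf J {z. snd z = b})"

definition Xs :: "('x \<times> nat \<times> nat) list \<Rightarrow> 'x list" where "Xs w = map fst w"
definition Ys :: "('x \<times> nat \<times> nat) list \<Rightarrow> nat list" where "Ys w = map (fst \<circ> snd) w"
definition Vs :: "('x \<times> nat \<times> nat) list \<Rightarrow> nat list" where "Vs w = map (snd \<circ> snd) w"

text \<open>(X^{1:N},Y^{1:N},V^{1:N}) i.i.d. q_XYV, N = 2^n; U = V G_n, T = Y G_n.\<close>
definition blk :: "('x \<times> nat \<times> nat) pmf \<Rightarrow> nat \<Rightarrow> ('x \<times> nat \<times> nat) list pmf" where
  "blk q n = iid (2^n) q"
definition Uof :: "nat \<Rightarrow> nat \<Rightarrow> ('x \<times> nat \<times> nat) list \<Rightarrow> nat list" where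
  "Uof qV n w = polar qV n (Vs w)"
definition Tof :: "nat \<Rightarrow> nat \<Rightarrow> ('x \<times> nat \<times> nat) list \<Rightarrow> nat list" where
  "Tof qY n w = polar qY n (Ys w)"

definition JU where
  "JU q qV n j = map_pmf (\<lambda>w. (Uof qV n w ! j, take j (Uof qV n w))) (blk q n)"
definition JUX where
  "JUX q qV n j = map_pmf (\<lambda>w. (Uof qV n w ! j, (take j (Uof qV n w), Xs w))) (blk q n)"
definition JUXY where
  "JUXY q qV n j = map_pmf (\<lambda>w. (Uof qV n w ! j, (take j (Uof qV n w), (Xs w, Ys w)))) (blk q n)"
definition JTV where
  "JTV q qY n j = map_pmf (\<lambda>w. (Tof qY n w ! j, (take j (Tof qY n w), Vs w))) (blk q n)"

definition deltaN :: "nat \<Rightarrow> real \<Rightarrow> real" where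
  "deltaN n \<beta> = 2 powr (- (((2::real) ^ n) powr \<beta>))"

definition HV where
  "HV q qV n \<beta> = {j. j < 2^n \<and> cond_ent (JU q qV n j) > deltaN n \<beta>}"
definition VVX where
  "VVX q qV n \<beta> = {j. j < 2^n \<and> cond_ent (JUX q qV n j) > log 2 (real qV) - deltaN n \<beta>}"
definition VYV where
  "VYV q qY n \<beta> = {j. j < 2^n \<and> cond_ent (JTV q qY n j) > log 2 (real qY) - deltaN n \<beta>}"
definition VVXY where
  "VVXY q qV n \<beta> = {j. j < 2^n \<and> cond_ent (JUXY q qV n j) > log 2 (real qV) - deltaN n \<beta>}"

definition F1 where "F1 q qV n \<beta> = {..<2^n} - HV q qV n \<beta>"
definition F2 where "F2 q qV n \<beta> = VVXY q qV n \<beta>"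
definition F3 where "F3 q qV n \<beta> = VVX q qV n \<beta> - VVXY q qV n \<beta>"
definition F4 where "F4 q qV n \<beta> = HV q qV n \<beta> - VVX q qV n \<beta>"

text \<open>Node 1: successive generation of the first m entries of U~_i (F_1..F_4 partition {..<N}).\<close>
primrec enc_prefix :: "('x \<times> nat \<times> nat) pmf \<Rightarrow> nat \<Rightarrow> nat \<Rightarrow> real \<Rightarrow> 'x list \<Rightarrow>
    (nat \<Rightarrow> nat) \<Rightarrow> (nat \<Rightarrow> nat) \<Rightarrow> nat \<Rightarrow> nat list pmf" where
  "enc_prefix q qV n \<beta> x cb c 0 = return_pmf []"
| "enc_prefix q qV n \<beta> x cb c (Suc m) =
     bind_pmf (enc_prefix q qV n \<beta> x cb c m) (\<lambda>u. map_pmf (\<lambda>a. u @ [a])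
       (if m \<in> F2 q qV n \<beta> then return_pmf (cb m)
        else if m \<in> F3 q qV n \<beta> then return_pmf (c m)
        else if m \<in> F1 q qV n \<beta> then condk (JU q qV n m) u
        else condk (JUX q qV n m) (u, x)))"

primrec dec_prefix :: "('x \<times> nat \<times> nat) pmf \<Rightarrow> nat \<Rightarrow> nat \<Rightarrow> real \<Rightarrow> nat list \<Rightarrow> nat \<Rightarrow> nat list pmf" where
  "dec_prefix q qY n \<beta> vt 0 = return_pmf []"
| "dec_prefix q qY n \<beta> vt (Suc m) =
     bind_pmf (dec_prefix q qY n \<beta> vt m) (\<lambda>t. map_pmf (\<lambda>a. t @ [a])
       (if m \<in> VYV q qY n \<beta> then pmf_of_set {..<qY}
        else condk (JTV q qY n m) (t, vt)))"

text \<open>One block: from X_i, C-bar_1 and C_i to the output Y~_i.\<close>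
definition block :: "('x \<times> nat \<times> nat) pmf \<Rightarrow> nat \<Rightarrow> nat \<Rightarrow> nat \<Rightarrow> real \<Rightarrow> 'x list \<Rightarrow>
    (nat \<Rightarrow> nat) \<Rightarrow> (nat \<Rightarrow> nat) \<Rightarrow> nat list pmf" where
  "block q qY qV n \<beta> x cb c =
     bind_pmf (enc_prefix q qV n \<beta> x cb c (2^n))
       (\<lambda>u. map_pmf (polar qY n) (dec_prefix q qY n \<beta> (polar qV n u) (2^n)))"

primrec scheme_blocks :: "('x \<times> nat \<times> nat) pmf \<Rightarrow> nat \<Rightarrow> nat \<Rightarrow> nat \<Rightarrow> real \<Rightarrow>
    (nat \<Rightarrow> nat) \<Rightarrow> nat \<Rightarrow> ('x list \<times> nat list) list pmf" where
  "scheme_blocks q qY qV n \<beta> cb 0 = return_pmf []"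
| "scheme_blocks q qY qV n \<beta> cb (Suc k) =
     bind_pmf (scheme_blocks q qY qV n \<beta> cb k) (\<lambda>bs.
     bind_pmf (iid (2^n) (map_pmf fst q)) (\<lambda>x.
     bind_pmf (pmf_of_set (Pi\<^sub>E (F3 q qV n \<beta>) (\<lambda>_. {..<qV}))) (\<lambda>c.
     map_pmf (\<lambda>y. bs @ [(x, y)]) (block q qY qV n \<beta> x cb c))))"

text \<open>Joint law of (C-bar_1, ((X_i, Y~_i))_{i=1..k}) induced by the scheme.\<close>
definition scheme :: "('x \<times> nat \<times> nat) pmf \<Rightarrow> nat \<Rightarrow> nat \<Rightarrow> nat \<Rightarrow> real \<Rightarrow> nat \<Rightarrow>
    ((nat \<Rightarrow> nat) \<times> ('x list \<times> nat list) list) pmf" where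
  "scheme q qY qV n \<beta> k =
     bind_pmf (pmf_of_set (Pi\<^sub>E (F2 q qV n \<beta>) (\<lambda>_. {..<qV})))
       (\<lambda>cb. map_pmf (\<lambda>bs. (cb, bs)) (scheme_blocks q qY qV n \<beta> cb k))"

definition markov_XVY :: "('x \<times> nat \<times> nat) pmf \<Rightarrow> bool" where
  "markov_XVY q = (\<forall>x y v. pmf q (x, y, v) * pmf (map_pmf (\<lambda>(x, y, v). v) q) v
      = pmf (map_pmf (\<lambda>(x, y, v). (x, v)) q) (x, v) * pmf (map_pmf (\<lambda>(x, y, v). (y, v)) q) (y, v))"

end

theory Submission
  imports Defs
begin

text \<open>Given the common randomness \<open>C\<close>, the \<open>k\<close> blocks \<open>B\<^sub>i = (X\<^sub>i, Y\<^sub>i)\<close> are i.i.d.,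
  since everything else a block uses is fresh; so the scheme is a mixture over \<open>C\<close> of i.i.d. laws.
  The divergence from the product of the marginals is \<open>k H(B) - H(B\<^sub>1, \<dots>, B\<^sub>k)\<close>, and
  \<open>H(B\<^sub>1, \<dots>, B\<^sub>k) \<ge> H(B\<^sub>1) + H(B\<^sub>2, \<dots>, B\<^sub>k | B\<^sub>1, C) = H(B) + (k - 1) H(B | C)\<close>,
  which bounds it by \<open>(k - 1) I(B; C)\<close>. Finally \<open>I(B; C) = I(B\<^sub>1; B\<^sub>2, C)\<close> is the assumed
  bound for the first pair of blocks.\<close>

lemma sum_set_pmf_map:
  assumes "finite (set_pmf p)"
  shows "(\<Sum>z\<in>set_pmf p. pmf p z * g (f z)) = (\<Sum>y\<in>set_pmf (map_pmf f p). pmf (map_pmf f p) y * (g y :: real))"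
proof -
  have "(\<Sum>z\<in>set_pmf p. pmf p z * g (f z)) = (\<integral>z. g (f z) \<partial>measure_pmf p)"
    using assms by (subst integral_measure_pmf_real[where A = "set_pmf p"]) (auto simp: mult.commute)
  also have "\<dots> = (\<integral>y. g y \<partial>measure_pmf (map_pmf f p))"
    by simp
  also have "\<dots> = (\<Sum>y\<in>set_pmf (map_pmf f p). pmf (map_pmf f p) y * g y)"
    using assms by (subst integral_measure_pmf_real[where A = "set_pmf (map_pmf f p)"]) (auto simp: mult.commute)
  finally show ?thesis .
qed

lemma sum_pmf_log_pmf_map:
  assumes "finite (set_pmf p)"
  shows "(\<Sum>z\<in>set_pmf p. pmf p z * log 2 (pmf (map_pmf f p) (f z))) = - shannon_ent (map_pmf f p)"
  using sum_set_pmf_map[OF assms, of "\<lambda>y. log 2 (pmf (map_pmf f p) y)" f]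
  by (simp add: shannon_ent_def)

lemma shannon_ent_map_inj:
  assumes "finite (set_pmf p)" and "inj_on f (set_pmf p)"
  shows "shannon_ent (map_pmf f p) = shannon_ent p"
proof -
  have "- shannon_ent (map_pmf f p) = (\<Sum>z\<in>set_pmf p. pmf p z * log 2 (pmf (map_pmf f p) (f z)))"
    using sum_pmf_log_pmf_map[OF assms(1), of f] by simp
  also have "\<dots> = - shannon_ent p"
    using assms(2) by (auto simp: shannon_ent_def pmf_map_inj sum_negf intro!: sum.cong)
  finally show ?thesis by simp
qed

lemma pmf_bind_Pair:
  "pmf (bind_pmf p (\<lambda>c. map_pmf (Pair c) (D c))) (c, x) = pmf p c * pmf (D c) x"
proof -
  have "pmf (map_pmf (Pair c') (D c')) (c, x) = (if c' = c then pmf (D c) x else 0)" for c'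
  proof (cases "c' = c")
    case True
    then show ?thesis using pmf_map_inj'[of "Pair c" "D c" x] by (simp add: inj_def)
  next
    case False
    then show ?thesis by (auto simp: pmf_eq_0_set_pmf)
  qed
  then have "pmf (bind_pmf p (\<lambda>c. map_pmf (Pair c) (D c))) (c, x)
      = (\<integral>c'. (if c' = c then pmf (D c) x else 0) \<partial>measure_pmf p)"
    by (simp add: pmf_bind)
  also have "\<dots> = pmf p c * pmf (D c) x"
    by (subst integral_measure_pmf_real[where A = "{c}"]) (auto split: if_splits)
  finally show ?thesis .
qed

definition cond_shannon_ent :: "'c pmf \<Rightarrow> ('c \<Rightarrow> 'a pmf) \<Rightarrow> real" where
  "cond_shannon_ent p D = (\<Sum>c\<in>set_pmf p. pmf p c * shannon_ent (D c))"

lemma cond_shannon_ent_scale: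
  assumes "\<And>c. c \<in> set_pmf p \<Longrightarrow> shannon_ent (D c) = a * shannon_ent (E c)"
  shows "cond_shannon_ent p D = a * cond_shannon_ent p E"
  using assms by (simp add: cond_shannon_ent_def sum_distrib_left mult_ac)

lemma map_pmf_bind_Pair:
  "map_pmf (\<lambda>z. (fst z, g (snd z))) (bind_pmf p (\<lambda>c. map_pmf (Pair c) (D c)))
     = bind_pmf p (\<lambda>c. map_pmf (Pair c) (map_pmf g (D c)))"
  by (simp add: map_bind_pmf pmf.map_comp o_def)

lemma shannon_ent_bind_Pair:
  assumes fin: "finite (set_pmf p)" and finD: "\<And>c. c \<in> set_pmf p \<Longrightarrow> finite (set_pmf (D c))"
  shows "shannon_ent (bind_pmf p (\<lambda>c. map_pmf (Pair c) (D c))) = shannon_ent p + cond_shannon_ent p D"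
proof -
  let ?P = "bind_pmf p (\<lambda>c. map_pmf (Pair c) (D c))"
  have inner: "(\<Sum>x\<in>set_pmf (D c). pmf p c * pmf (D c) x * log 2 (pmf p c * pmf (D c) x))
      = pmf p c * log 2 (pmf p c) - pmf p c * shannon_ent (D c)" if c: "c \<in> set_pmf p" for c
  proof -
    have "(\<Sum>x\<in>set_pmf (D c). pmf p c * pmf (D c) x * log 2 (pmf p c * pmf (D c) x))
        = (\<Sum>x\<in>set_pmf (D c). pmf p c * log 2 (pmf p c) * pmf (D c) x
            + pmf p c * (pmf (D c) x * log 2 (pmf (D c) x)))"
      using c by (intro sum.cong refl) (simp add: pmf_positive log_mult algebra_simps)
    then show ?thesis
      using finD[OF c]
      by (simp add: sum.distrib sum_distrib_left[symmetric] sum_pmf_eq_1 shannon_ent_def)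
  qed
  have "(\<Sum>z\<in>set_pmf ?P. pmf ?P z * log 2 (pmf ?P z))
      = (\<Sum>c\<in>set_pmf p. \<Sum>x\<in>set_pmf (D c). pmf p c * pmf (D c) x * log 2 (pmf p c * pmf (D c) x))"
  proof -
    have "set_pmf ?P = Sigma (set_pmf p) (\<lambda>c. set_pmf (D c))"
      by auto
    then show ?thesis
      using fin finD by (simp only:) (subst sum.Sigma, auto intro!: sum.cong simp: pmf_bind_Pair)
  qed
  also have "\<dots> = (\<Sum>c\<in>set_pmf p. pmf p c * log 2 (pmf p c)) - (\<Sum>c\<in>set_pmf p. pmf p c * shannon_ent (D c))"
    by (simp add: inner sum_subtractf)
  finally show ?thesis
    by (simp add: shannon_ent_def[of ?P] shannon_ent_def[of p] cond_shannon_ent_def)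
qed

lemma shannon_ent_pair_pmf:
  assumes "finite (set_pmf A)" and "finite (set_pmf B)"
  shows "shannon_ent (pair_pmf A B) = shannon_ent A + shannon_ent B"
proof -
  have "pair_pmf A B = bind_pmf A (\<lambda>a. map_pmf (Pair a) B)"
    by (simp add: pair_pmf_def map_pmf_def)
  then show ?thesis
    using assms shannon_ent_bind_Pair[of A "\<lambda>_. B"]
    by (simp add: cond_shannon_ent_def sum_distrib_right[symmetric] sum_pmf_eq_1)
qed

lemma KL_pair_pmf_marginals:
  assumes fin: "finite (set_pmf J)"
  shows "KL J (pair_pmf (map_pmf fst J) (map_pmf snd J))
       = shannon_ent (map_pmf fst J) + shannon_ent (map_pmf snd J) - shannon_ent J"
proof -
  let ?A = "map_pmf fst J" and ?B = "map_pmf snd J"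
  have "KL J (pair_pmf ?A ?B) = (\<Sum>z\<in>set_pmf J. pmf J z * log 2 (pmf J z)
      - pmf J z * log 2 (pmf ?A (fst z)) - pmf J z * log 2 (pmf ?B (snd z)))"
    unfolding KL_def
  proof (intro sum.cong refl)
    fix z assume "z \<in> set_pmf J"
    then have "0 < pmf J z" "0 < pmf ?A (fst z)" "0 < pmf ?B (snd z)"
      by (auto simp: pmf_positive)
    then show "pmf J z * log 2 (pmf J z / pmf (pair_pmf ?A ?B) z) = pmf J z * log 2 (pmf J z)
        - pmf J z * log 2 (pmf ?A (fst z)) - pmf J z * log 2 (pmf ?B (snd z))"
      by (cases z) (simp add: pmf_pair log_divide log_mult algebra_simps)
  qed
  also have "\<dots> = - shannon_ent J + shannon_ent ?A + shannon_ent ?B"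
    using sum_pmf_log_pmf_map[OF fin, of fst] sum_pmf_log_pmf_map[OF fin, of snd]
    by (simp add: sum_subtractf shannon_ent_def)
  finally show ?thesis
    by simp
qed

lemma KL_nonneg:
  assumes fin: "finite (set_pmf p)" and supp: "set_pmf p \<subseteq> set_pmf r"
  shows "0 \<le> KL p r"
proof -
  have "(\<Sum>a\<in>set_pmf p. (pmf p a - pmf r a) / ln 2) \<le> KL p r"
    unfolding KL_def
  proof (intro sum_mono)
    fix a assume a: "a \<in> set_pmf p"
    then have pos: "0 < pmf p a" "0 < pmf r a"
      using supp by (auto simp: pmf_positive)
    have "ln (pmf r a / pmf p a) \<le> pmf r a / pmf p a - 1"
      using pos by (intro ln_le_minus_one) auto
    then have "pmf p a - pmf r a \<le> pmf p a * ln (pmf p a / pmf r a)"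
      using pos by (simp add: ln_div field_simps)
    then show "(pmf p a - pmf r a) / ln 2 \<le> pmf p a * log 2 (pmf p a / pmf r a)"
      by (simp add: log_def divide_right_mono)
  qed
  moreover have "(\<Sum>a\<in>set_pmf p. (pmf p a - pmf r a) / ln 2) = (1 - measure r (set_pmf p)) / ln 2"
    using fin by (simp add: sum_divide_distrib[symmetric] sum_subtractf sum_pmf_eq_1
        measure_measure_pmf_finite)
  moreover have "0 \<le> (1 - measure r (set_pmf p)) / ln 2"
    by simp
  ultimately show ?thesis
    by linarith
qed

lemma pmf_condk:
  assumes "(c, b) \<in> set_pmf J"
  shows "pmf (condk J b) c = pmf J (c, b) / pmf (map_pmf snd J) b"
proof -
  let ?C = "cond_pmf J {z. snd z = b}"
  have ne: "set_pmf J \<inter> {z. snd z = b} \<noteq> {}"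
    using assms by auto
  have "inj_on fst (set_pmf ?C)"
    using ne by (auto simp: inj_on_def prod_eq_iff)
  moreover have "(c, b) \<in> set_pmf ?C"
    using ne assms by simp
  ultimately have "pmf (condk J b) c = pmf ?C (c, b)"
    unfolding condk_def using pmf_map_inj by fastforce
  also have "\<dots> = pmf J (c, b) / measure J {z. snd z = b}"
    using ne by (simp add: pmf_cond)
  also have "measure J {z. snd z = b} = pmf (map_pmf snd J) b"
    by (simp add: pmf_map vimage_def)
  finally show ?thesis .
qed

text \<open>The divergence of the joint law of \<open>(C, B, R)\<close> from its Markov approximation
  \<open>C - B - R\<close> is non-negative.\<close>
lemma shannon_ent_strong_subadditivity:
  fixes J :: "('c \<times> 'b \<times> 'r) pmf"
  assumes fin: "finite (set_pmf J)"
  shows "shannon_ent J + shannon_ent (map_pmf (\<lambda>z. fst (snd z)) J)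
     \<le> shannon_ent (map_pmf (\<lambda>z. (fst z, fst (snd z))) J) + shannon_ent (map_pmf snd J)"
proof -
  define Jcb where "Jcb = map_pmf (\<lambda>z. (fst z, fst (snd z))) J"
  define Jbr where "Jbr = map_pmf snd J"
  define Jb where "Jb = map_pmf (\<lambda>z. fst (snd z)) J"
  define Q where "Q = map_pmf (\<lambda>(y, c). (c, y)) (bind_pmf Jbr (\<lambda>y. map_pmf (Pair y) (condk Jcb (fst y))))"
  have pmf_Q: "pmf Q z = pmf Jcb (fst z, fst (snd z)) * pmf Jbr (snd z) / pmf Jb (fst (snd z))"
    if "z \<in> set_pmf J" for z
  proof -
    obtain c b r where z: "z = (c, b, r)"
      by (cases z) auto
    have "inj (\<lambda>(y :: 'b \<times> 'r, c :: 'c). (c, y))"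
      by (auto simp: inj_def)
    then have "pmf Q z = pmf Jbr (b, r) * pmf (condk Jcb b) c"
      unfolding Q_def z using pmf_map_inj'[of "\<lambda>(y, c). (c, y)" _ "((b, r), c)"]
      by (simp add: pmf_bind_Pair)
    moreover have "(c, b) \<in> set_pmf Jcb" and "map_pmf snd Jcb = Jb"
      using that by (force simp: z Jcb_def, simp add: Jcb_def Jb_def pmf.map_comp o_def)
    ultimately show ?thesis
      by (simp add: z pmf_condk)
  qed
  have pos: "0 < pmf J z" "0 < pmf Jcb (fst z, fst (snd z))" "0 < pmf Jbr (snd z)" "0 < pmf Jb (fst (snd z))"
    if "z \<in> set_pmf J" for z
    using that by (auto simp: Jcb_def Jbr_def Jb_def pmf_positive)
  have "set_pmf J \<subseteq> set_pmf Q"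
  proof
    fix z assume z: "z \<in> set_pmf J"
    then have "0 < pmf Q z"
      using pos[OF z] by (simp add: pmf_Q)
    then show "z \<in> set_pmf Q"
      by (simp add: set_pmf_iff)
  qed
  then have "0 \<le> KL J Q"
    using fin by (rule KL_nonneg[rotated])
  also have "KL J Q = (\<Sum>z\<in>set_pmf J. pmf J z * log 2 (pmf J z) + pmf J z * log 2 (pmf Jb (fst (snd z)))
      - pmf J z * log 2 (pmf Jcb (fst z, fst (snd z))) - pmf J z * log 2 (pmf Jbr (snd z)))"
    unfolding KL_def
  proof (intro sum.cong refl)
    fix z assume "z \<in> set_pmf J"
    with pos[OF this] show "pmf J z * log 2 (pmf J z / pmf Q z) = pmf J z * log 2 (pmf J z)
        + pmf J z * log 2 (pmf Jb (fst (snd z))) - pmf J z * log 2 (pmf Jcb (fst z, fst (snd z)))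
        - pmf J z * log 2 (pmf Jbr (snd z))"
      by (simp add: pmf_Q log_divide log_mult algebra_simps)
  qed
  also have "\<dots> = shannon_ent Jcb + shannon_ent Jbr - shannon_ent Jb - shannon_ent J"
    using sum_pmf_log_pmf_map[OF fin, of "\<lambda>z. (fst z, fst (snd z))"]
      sum_pmf_log_pmf_map[OF fin, of snd] sum_pmf_log_pmf_map[OF fin, of "\<lambda>z. fst (snd z)"]
    by (simp add: sum.distrib sum_subtractf shannon_ent_def[of J] Jcb_def Jbr_def Jb_def)
  finally show ?thesis
    by (simp add: Jcb_def Jbr_def Jb_def)
qed

lemma pmf_indep_list:
  "pmf (indep_list ps) xs = (if length xs = length ps then (\<Prod>i<length ps. pmf (ps ! i) (xs ! i)) else 0)"
proof (induction ps arbitrary: xs)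
  case Nil
  then show ?case
    by (cases xs) (auto simp: pmf_return)
next
  case (Cons p ps)
  have eq: "indep_list (p # ps) = map_pmf (\<lambda>(a, as). a # as) (pair_pmf p (indep_list ps))"
    by (simp add: pair_pmf_def map_bind_pmf map_pmf_def[symmetric] pmf.map_comp o_def)
  show ?case
  proof (cases xs)
    case Nil
    then show ?thesis
      by (auto simp: eq pmf_eq_0_set_pmf)
  next
    case (Cons a as)
    have inj: "inj (\<lambda>(a :: 'a, as). a # as)"
      by (auto simp: inj_def)
    have "pmf (indep_list (p # ps)) xs = pmf p a * pmf (indep_list ps) as"
      unfolding eq Cons using pmf_map_inj'[OF inj, of "pair_pmf p (indep_list ps)" "(a, as)"]
      by (simp add: pmf_pair)
    then show ?thesis
      using Cons.IH[of as] by (simp add: Cons prod.lessThan_Suc_shift del: prod.lessThan_Suc)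
  qed
qed

lemma KL_indep_list_marginals:
  fixes M :: "'a list pmf"
  assumes fin: "finite (set_pmf M)" and len: "\<And>l. l \<in> set_pmf M \<Longrightarrow> length l = k"
  shows "KL M (indep_list (map (\<lambda>i. map_pmf (\<lambda>l. l ! i) M) [0..<k]))
       = (\<Sum>i<k. shannon_ent (map_pmf (\<lambda>l. l ! i) M)) - shannon_ent M"
proof -
  let ?m = "\<lambda>i. map_pmf (\<lambda>l. l ! i) M"
  have "KL M (indep_list (map ?m [0..<k]))
      = (\<Sum>l\<in>set_pmf M. pmf M l * log 2 (pmf M l) - (\<Sum>i<k. pmf M l * log 2 (pmf (?m i) (l ! i))))"
    unfolding KL_def
  proof (intro sum.cong refl)
    fix l assume l: "l \<in> set_pmf M"
    have pos: "0 < pmf (?m i) (l ! i)" for i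
      using l by (auto simp: pmf_positive)
    have "pmf (indep_list (map ?m [0..<k])) l = (\<Prod>i<k. pmf (?m i) (l ! i))"
      using len[OF l] by (simp add: pmf_indep_list)
    moreover have "log 2 (\<Prod>i<k. pmf (?m i) (l ! i)) = (\<Sum>i<k. log 2 (pmf (?m i) (l ! i)))"
      using pos by (simp add: log_def ln_prod sum_divide_distrib less_imp_neq[symmetric])
    moreover have "0 < (\<Prod>i<k. pmf (?m i) (l ! i))" "0 < pmf M l"
      using pos l by (auto simp: prod_pos pmf_positive)
    ultimately show "pmf M l * log 2 (pmf M l / pmf (indep_list (map ?m [0..<k])) l)
       = pmf M l * log 2 (pmf M l) - (\<Sum>i<k. pmf M l * log 2 (pmf (?m i) (l ! i)))"
      using pos by (simp add: log_divide right_diff_distrib sum_distrib_left less_imp_neq[symmetric])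
  qed
  also have "\<dots> = - shannon_ent M - (\<Sum>i<k. \<Sum>l\<in>set_pmf M. pmf M l * log 2 (pmf (?m i) (l ! i)))"
    by (simp add: sum_subtractf sum.swap[of _ "{..<k}"] shannon_ent_def[of M])
  also have "(\<Sum>i<k. \<Sum>l\<in>set_pmf M. pmf M l * log 2 (pmf (?m i) (l ! i))) = (\<Sum>i<k. - shannon_ent (?m i))"
    by (intro sum.cong refl sum_pmf_log_pmf_map[OF fin])
  finally show ?thesis
    by (simp add: sum_negf)
qed

lemma length_set_pmf_iid: "l \<in> set_pmf (iid m p) \<Longrightarrow> length l = m"
  by (induction m arbitrary: l) auto

lemma finite_set_pmf_iid: "finite (set_pmf p) \<Longrightarrow> finite (set_pmf (iid m p))"
  by (induction m) auto

lemma iid_Suc_pair: "iid (Suc m) p = map_pmf (\<lambda>(a, as). a # as) (pair_pmf p (iid m p))"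
  by (simp add: pair_pmf_def map_bind_pmf map_pmf_def[symmetric] pmf.map_comp o_def)

lemma iid_Suc_snoc: "iid (Suc m) p = bind_pmf (iid m p) (\<lambda>bs. map_pmf (\<lambda>b. bs @ [b]) p)"
proof (induction m)
  case 0
  then show ?case
    by (simp add: bind_return_pmf map_pmf_def)
next
  case (Suc m)
  have "iid (Suc (Suc m)) p = bind_pmf p (\<lambda>a. map_pmf (Cons a) (iid (Suc m) p))"
    by (simp only: iid.simps)
  also have "\<dots> = bind_pmf p (\<lambda>a. map_pmf (Cons a) (bind_pmf (iid m p) (\<lambda>bs. map_pmf (\<lambda>b. bs @ [b]) p)))"
    by (simp only: Suc.IH)
  also have "\<dots> = bind_pmf (bind_pmf p (\<lambda>a. map_pmf (Cons a) (iid m p))) (\<lambda>bs. map_pmf (\<lambda>b. bs @ [b]) p)"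
    by (simp add: map_bind_pmf bind_map_pmf bind_assoc_pmf pmf.map_comp o_def)
  finally show ?case
    by (simp only: iid.simps)
qed

lemma map_pmf_nth_iid: "i < m \<Longrightarrow> map_pmf (\<lambda>l. l ! i) (iid m p) = p"
proof (induction m arbitrary: i)
  case (Suc m)
  then show ?case
    by (cases i) (simp_all add: map_bind_pmf pmf.map_comp o_def bind_return_pmf')
qed simp

lemma map_pmf_nth_0_1_iid: "2 \<le> m \<Longrightarrow> map_pmf (\<lambda>l. (l ! 0, l ! 1)) (iid m p) = pair_pmf p p"
proof -
  assume "2 \<le> m"
  then obtain m' where "m = Suc (Suc m')"
    by (metis add_2_eq_Suc le_Suc_ex)
  then show ?thesis
    by (simp add: map_bind_pmf pmf.map_comp o_def pair_pmf_def)
qed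

lemma shannon_ent_iid:
  assumes "finite (set_pmf p)"
  shows "shannon_ent (iid m p) = real m * shannon_ent p"
proof (induction m)
  case 0
  then show ?case
    by (simp add: shannon_ent_def)
next
  case (Suc m)
  have "inj (\<lambda>(a :: 'a, as). a # as)"
    by (auto simp: inj_def)
  then have "shannon_ent (iid (Suc m) p) = shannon_ent (pair_pmf p (iid m p))"
    unfolding iid_Suc_pair using assms finite_set_pmf_iid[OF assms]
    by (intro shannon_ent_map_inj) (auto intro: inj_on_subset)
  also have "\<dots> = shannon_ent p + shannon_ent (iid m p)"
    using assms finite_set_pmf_iid[OF assms] by (rule shannon_ent_pair_pmf)
  finally show ?case
    using Suc.IH by (simp add: algebra_simps)
qed

definition cond_iid :: "'c pmf \<Rightarrow> ('c \<Rightarrow> 'b pmf) \<Rightarrow> nat \<Rightarrow> ('c \<times> 'b list) pmf" where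
  "cond_iid p K k = bind_pmf p (\<lambda>c. map_pmf (Pair c) (iid k (K c)))"

lemma map_pmf_nth_cond_iid:
  assumes "i < k"
  shows "map_pmf (\<lambda>z. snd z ! i) (cond_iid p K k) = bind_pmf p K"
  using assms by (simp add: cond_iid_def map_bind_pmf pmf.map_comp o_def map_pmf_nth_iid)

context
  fixes p :: "'c pmf" and K :: "'c \<Rightarrow> 'b pmf"
  assumes fin_p: "finite (set_pmf p)"
    and fin_K: "\<And>c. c \<in> set_pmf p \<Longrightarrow> finite (set_pmf (K c))"
begin

lemma finite_set_pmf_cond_iid: "finite (set_pmf (cond_iid p K k))"
  using fin_p fin_K finite_set_pmf_iid by (auto simp: cond_iid_def)

lemma shannon_ent_cond_iid:
  "shannon_ent (cond_iid p K k) = shannon_ent p + real k * cond_shannon_ent p K"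
proof -
  have "shannon_ent (cond_iid p K k) = shannon_ent p + cond_shannon_ent p (\<lambda>c. iid k (K c))"
    unfolding cond_iid_def using fin_p fin_K by (intro shannon_ent_bind_Pair finite_set_pmf_iid)
  also have "cond_shannon_ent p (\<lambda>c. iid k (K c)) = real k * cond_shannon_ent p K"
    using fin_K by (intro cond_shannon_ent_scale shannon_ent_iid)
  finally show ?thesis .
qed

lemma shannon_ent_seed_block:
  assumes "i < k"
  shows "shannon_ent (map_pmf (\<lambda>z. (fst z, snd z ! i)) (cond_iid p K k)) = shannon_ent p + cond_shannon_ent p K"
proof -
  have "map_pmf (\<lambda>z. (fst z, snd z ! i)) (cond_iid p K k) = bind_pmf p (\<lambda>c. map_pmf (Pair c) (K c))"
    using assms by (simp add: cond_iid_def map_pmf_bind_Pair[of "\<lambda>l. l ! i", simplified] map_pmf_nth_iid)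
  then show ?thesis
    using fin_p fin_K by (simp add: shannon_ent_bind_Pair)
qed

lemma shannon_ent_first_two_blocks:
  assumes "2 \<le> k"
  shows "shannon_ent (map_pmf (\<lambda>z. (snd z ! 0, snd z ! 1, fst z)) (cond_iid p K k))
       = shannon_ent p + 2 * cond_shannon_ent p K"
proof -
  let ?J = "bind_pmf p (\<lambda>c. map_pmf (Pair c) (pair_pmf (K c) (K c)))"
  have J: "map_pmf (\<lambda>z. (fst z, snd z ! 0, snd z ! 1)) (cond_iid p K k) = ?J"
    using assms
    by (simp add: cond_iid_def map_pmf_bind_Pair[of "\<lambda>l. (l ! 0, l ! 1)", simplified] map_pmf_nth_0_1_iid[simplified])
  have "map_pmf (\<lambda>z. (snd z ! 0, snd z ! 1, fst z)) (cond_iid p K k) = map_pmf (\<lambda>(c, a, b). (a, b, c)) ?J"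
    unfolding J[symmetric] by (simp add: pmf.map_comp o_def)
  moreover have "shannon_ent (map_pmf (\<lambda>(c, a, b). (a, b, c)) ?J) = shannon_ent ?J"
    using fin_p fin_K by (intro shannon_ent_map_inj) (auto simp: inj_on_def)
  moreover have "shannon_ent ?J = shannon_ent p + 2 * cond_shannon_ent p K"
    using fin_p fin_K by (simp add: shannon_ent_bind_Pair shannon_ent_pair_pmf cond_shannon_ent_scale)
  ultimately show ?thesis
    by simp
qed

text \<open>Conditioning the later blocks on the seed as well as on the first block can only lower
  their entropy.\<close>
lemma shannon_ent_blocks_cond_iid_ge:
  assumes "1 \<le> k"
  shows "shannon_ent (bind_pmf p K) + (real k - 1) * cond_shannon_ent p K
      \<le> shannon_ent (map_pmf snd (cond_iid p K k))"
proof -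
  let ?P = "cond_iid p K k"
  define J where "J = map_pmf (\<lambda>z. (fst z, snd z ! 0, snd z)) ?P"
  have "finite (set_pmf J)"
    unfolding J_def using finite_set_pmf_cond_iid by simp
  then have "shannon_ent J + shannon_ent (map_pmf (\<lambda>z. fst (snd z)) J)
      \<le> shannon_ent (map_pmf (\<lambda>z. (fst z, fst (snd z))) J) + shannon_ent (map_pmf snd J)"
    by (rule shannon_ent_strong_subadditivity)
  moreover have "shannon_ent J = shannon_ent ?P"
    unfolding J_def using finite_set_pmf_cond_iid by (intro shannon_ent_map_inj) (auto simp: inj_on_def)
  moreover have "map_pmf (\<lambda>z. fst (snd z)) J = bind_pmf p K"
    unfolding J_def using assms map_pmf_nth_cond_iid[of 0 k] by (simp add: pmf.map_comp o_def)
  moreover have "map_pmf (\<lambda>z. (fst z, fst (snd z))) J = map_pmf (\<lambda>z. (fst z, snd z ! 0)) ?P"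
    unfolding J_def by (simp add: pmf.map_comp o_def)
  moreover have "shannon_ent (map_pmf snd J) = shannon_ent (map_pmf snd ?P)"
  proof -
    have "map_pmf snd J = map_pmf (\<lambda>l. (l ! 0, l)) (map_pmf snd ?P)"
      unfolding J_def by (simp add: pmf.map_comp o_def)
    then show ?thesis
      using finite_set_pmf_cond_iid by (simp add: shannon_ent_map_inj inj_on_def)
  qed
  ultimately show ?thesis
    using assms by (simp add: shannon_ent_cond_iid shannon_ent_seed_block algebra_simps)
qed

lemma KL_indep_list_cond_iid_le:
  assumes "1 \<le> k"
  shows "KL (map_pmf snd (cond_iid p K k)) (indep_list (map (\<lambda>i. map_pmf (\<lambda>z. snd z ! i) (cond_iid p K k)) [0..<k]))
      \<le> (real k - 1) * (shannon_ent (bind_pmf p K) - cond_shannon_ent p K)"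
proof -
  let ?M = "map_pmf snd (cond_iid p K k)"
  have marginals: "map_pmf (\<lambda>l. l ! i) ?M = bind_pmf p K" if "i < k" for i
    using map_pmf_nth_cond_iid[OF that] by (simp add: pmf.map_comp o_def)
  have "finite (set_pmf ?M)"
    using finite_set_pmf_cond_iid by simp
  moreover have "length l = k" if "l \<in> set_pmf ?M" for l
    using that length_set_pmf_iid by (auto simp: cond_iid_def)
  ultimately have "KL ?M (indep_list (map (\<lambda>i. map_pmf (\<lambda>l. l ! i) ?M) [0..<k]))
      = (\<Sum>i<k. shannon_ent (map_pmf (\<lambda>l. l ! i) ?M)) - shannon_ent ?M"
    by (rule KL_indep_list_marginals)
  also have "(\<Sum>i<k. shannon_ent (map_pmf (\<lambda>l. l ! i) ?M)) = real k * shannon_ent (bind_pmf p K)"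
    by (simp add: marginals)
  finally show ?thesis
    using shannon_ent_blocks_cond_iid_ge[OF assms] by (simp add: pmf.map_comp o_def algebra_simps)
qed

lemma KL_first_two_blocks_cond_iid:
  assumes "2 \<le> k"
  shows "KL (map_pmf (\<lambda>z. (snd z ! 0, snd z ! 1, fst z)) (cond_iid p K k))
            (pair_pmf (map_pmf (\<lambda>z. snd z ! 0) (cond_iid p K k)) (map_pmf (\<lambda>z. (snd z ! 1, fst z)) (cond_iid p K k)))
       = shannon_ent (bind_pmf p K) - cond_shannon_ent p K"
proof -
  let ?P = "cond_iid p K k"
  let ?J = "map_pmf (\<lambda>z. (snd z ! 0, snd z ! 1, fst z)) ?P"
  have "finite (set_pmf ?J)"
    using finite_set_pmf_cond_iid by simp
  then have "KL ?J (pair_pmf (map_pmf fst ?J) (map_pmf snd ?J))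
      = shannon_ent (map_pmf fst ?J) + shannon_ent (map_pmf snd ?J) - shannon_ent ?J"
    by (rule KL_pair_pmf_marginals)
  moreover have "map_pmf fst ?J = map_pmf (\<lambda>z. snd z ! 0) ?P"
    by (simp add: pmf.map_comp o_def)
  moreover have "map_pmf (\<lambda>z. snd z ! 0) ?P = bind_pmf p K"
    using assms by (simp add: map_pmf_nth_cond_iid)
  moreover have "map_pmf snd ?J = map_pmf prod.swap (map_pmf (\<lambda>z. (fst z, snd z ! 1)) ?P)"
    by (simp add: pmf.map_comp o_def)
  moreover have "shannon_ent (map_pmf prod.swap (map_pmf (\<lambda>z. (fst z, snd z ! 1)) ?P))
      = shannon_ent p + cond_shannon_ent p K"
    using assms finite_set_pmf_cond_iid by (simp add: shannon_ent_map_inj shannon_ent_seed_block)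
  moreover have "map_pmf (\<lambda>z. (snd z ! 1, fst z)) ?P = map_pmf snd ?J"
    by (simp add: pmf.map_comp o_def)
  ultimately show ?thesis
    using shannon_ent_first_two_blocks[OF assms] by simp
qed

end

definition scheme_block :: "('x \<times> nat \<times> nat) pmf \<Rightarrow> nat \<Rightarrow> nat \<Rightarrow> nat \<Rightarrow> real \<Rightarrow>
    (nat \<Rightarrow> nat) \<Rightarrow> ('x list \<times> nat list) pmf" where
  "scheme_block q qY qV n \<beta> cb =
     bind_pmf (iid (2^n) (map_pmf fst q)) (\<lambda>x.
     bind_pmf (pmf_of_set (Pi\<^sub>E (F3 q qV n \<beta>) (\<lambda>_. {..<qV}))) (\<lambda>c.
     map_pmf (Pair x) (block q qY qV n \<beta> x cb c)))"

lemma scheme_blocks_eq_iid: "scheme_blocks q qY qV n \<beta> cb k = iid k (scheme_block q qY qV n \<beta> cb)"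
  by (induction k)
    (simp_all add: iid_Suc_snoc scheme_block_def map_bind_pmf bind_map_pmf bind_assoc_pmf pmf.map_comp o_def
      del: iid.simps(2))

lemma scheme_eq_cond_iid:
  "scheme q qY qV n \<beta> k
     = cond_iid (pmf_of_set (Pi\<^sub>E (F2 q qV n \<beta>) (\<lambda>_. {..<qV}))) (scheme_block q qY qV n \<beta>) k"
  by (simp add: scheme_def cond_iid_def scheme_blocks_eq_iid)

lemma finite_set_pmf_scheme_block:
  fixes q :: "('x::finite \<times> nat \<times> nat) pmf"
  assumes "0 < qY"
  shows "finite (set_pmf (scheme_block q qY qV n \<beta> cb))"
proof -
  have "set_pmf (scheme_block q qY qV n \<beta> cb)
      \<subseteq> {xs. set xs \<subseteq> UNIV \<and> length xs = 2^n} \<times> {ys. set ys \<subseteq> {..<qY} \<and> length ys = 2^n}"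
    using assms by (auto simp: scheme_block_def block_def polar_def dest: length_set_pmf_iid)
  moreover have "finite ({xs :: 'x list. set xs \<subseteq> UNIV \<and> length xs = 2^n} \<times> {ys. set ys \<subseteq> {..<qY} \<and> length ys = 2^n})"
    by (intro finite_cartesian_product finite_lists_length_eq) auto
  ultimately show ?thesis
    by (rule finite_subset)
qed

theorem lemma12:
  fixes q :: "('x::finite \<times> nat \<times> nat) pmf"
    and qY qV n k :: nat and \<beta> \<delta>C :: real
  assumes "prime qY" and "prime qV"
    and "set_pmf q \<subseteq> UNIV \<times> {..<qY} \<times> {..<qV}"
    and "markov_XVY q"
    and "0 < \<beta>" and "\<beta> < 1/2"
    and "1 \<le> k"
    and "\<forall>i\<in>{1..<k}.
           KL (map_pmf (\<lambda>z. (snd z ! (i - 1), (snd z ! i, fst z))) (scheme q qY qV n \<beta> k))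
              (pair_pmf (map_pmf (\<lambda>z. snd z ! (i - 1)) (scheme q qY qV n \<beta> k))
                        (map_pmf (\<lambda>z. (snd z ! i, fst z)) (scheme q qY qV n \<beta> k)))
           \<le> \<delta>C"
  shows "KL (map_pmf snd (scheme q qY qV n \<beta> k))
            (indep_list (map (\<lambda>i. map_pmf (\<lambda>z. snd z ! i) (scheme q qY qV n \<beta> k)) [0..<k]))
         \<le> (real k - 1) * \<delta>C"
proof -
  let ?A = "Pi\<^sub>E (F2 q qV n \<beta>) (\<lambda>_. {..<qV})"
  let ?K = "scheme_block q qY qV n \<beta>"
  let ?I = "shannon_ent (bind_pmf (pmf_of_set ?A) ?K) - cond_shannon_ent (pmf_of_set ?A) ?K"
  have "finite ?A" and "?A \<noteq> {}"
    using assms(2) prime_gt_0_nat by (auto simp: F2_def VVXY_def PiE_eq_empty_iff intro!: finite_PiE)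
  then have fin_seed: "finite (set_pmf (pmf_of_set ?A))"
    by simp
  have fin_K: "finite (set_pmf (?K c))" for c
    using assms(1) prime_gt_0_nat by (intro finite_set_pmf_scheme_block) auto
  have total: "KL (map_pmf snd (scheme q qY qV n \<beta> k))
      (indep_list (map (\<lambda>i. map_pmf (\<lambda>z. snd z ! i) (scheme q qY qV n \<beta> k)) [0..<k])) \<le> (real k - 1) * ?I"
    unfolding scheme_eq_cond_iid using fin_seed fin_K assms(7) by (rule KL_indep_list_cond_iid_le)
  show ?thesis
  proof (cases "k = 1")
    case True
    then show ?thesis
      using total by simp
  next
    case False
    then have "2 \<le> k"
      using assms(7) by simp
    then have "?I \<le> \<delta>C"
      using bspec[OF assms(8), of 1] KL_first_two_blocks_cond_iid[where K = ?K, OF fin_seed fin_K]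
      by (simp add: scheme_eq_cond_iid)
    then have "(real k - 1) * ?I \<le> (real k - 1) * \<delta>C"
      using assms(7) by (intro mult_left_mono) auto
    then show ?thesis
      using total by linarith
  qed
qed

end
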